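(* Assume all of the following: - Assumption 1 holds: (i) $\{Y(0),Y(1)\}\perp\!\!\!\perp A\mid X$; (ii) $\epsilon<\mathbb{P}(A=1\mid X=x)<1-\epsilon$ for all $x\in\mathcal X$, for some constant $0<\epsilon<1/2$. - Condition 1 holds: (i) $\Psi(\beta)$ is continuously differentiable in $\beta$ on a neighborhood of $\beta^\dagger$; (ii) $\beta$ ranges over $[0,M]$ for a finite constant $M$, and $\beta^\dagger$ is an interior point of $[0,M]$; (iii) $|\partial\Psi(\beta^\dagger)/\partial\beta|\ge c>0$ for some constant $c$. - Condition 2 holds: for every $\beta$, the random variable $\tau(X)-\beta\,\mathrm{THR}_U(X)$ has a bounded density. - The estimators are uniformly consistent: for each $k$, $\sup_x|\hat\tau^{(-k)}(x)-\tau(x)|\xrightarrow{\mathbb P}0$ and $\sup_x|\widehat{\mathrm{THR}}_U^{(-k)}(x)-\mathrm{THR}_U(x)|\xrightarrow{\mathbb P}0$. Then $\hat\beta^{(k)}\xrightarrow{\mathbb P}\beta^\dagger$.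
   Context: Setting. Tuples $\{X,A,Y(1),Y(0)\}$ are drawn from a superpopulation. $X\in\mathcal X$ are covariates, $A\in\{0,1\}$ is a treatment, and $Y(a)\in\{0,1\}$ are potential outcomes. The observed outcome is $Y=AY(1)+(1-A)Y(0)$. We observe an i.i.d. sample $\{(X_i,A_i,Y_i)\}_{i=1}^N$. Notation: - $\mu_a(x)=\mathbb{E}(Y\mid A=a,X=x)$ for $a=0,1$. - $\tau(x)=\mathbb{E}\{Y(1)-Y(0)\mid X=x\}$, which equals $\mu_1(x)-\mu_0(x)$ under Assumption 1. - $\mathrm{THR}_U(x)=\min\{\mu_0(x),1-\mu_1(x)\}$. - $\lambda$ is a fixed threshold. - $\Psi(\beta)=\mathbb{E}[\mathrm{THR}_U(X)\,\mathbb{I}\{\tau(X)-\beta\,\mathrm{THR}_U(X)>0\}]-\lambda$. - $\beta^\dagger$ is the solution of $\Psi(\beta)=0$. Estimation procedure. - Partition $\{1,\dots,N\}$ at random into $K$ index sets $\mathcal I_1,\dots,\mathcal I_K$, each of size $N/K$, where $K$ is fixed. Let $\mathcal I_k^c$ be the complement of $\mathcal I_k$. - For each $k$, let $\hat\tau^{(-k)}$ and $\widehat{\mathrm{THR}}_U^{(-k)}$ be estimators of $\tau$ and $\mathrm{THR}_U$ computed only from the observations indexed by $\mathcal I_k^c$. - Let $\hat\beta^{(k)}\in[0,M]$ be a solution in $\beta$ of $$\frac{1}{|\mathcal I_k|}\sum_{i\in\mathcal I_k}\widehat{\mathrm{THR}}_U^{(-k)}(X_i)\,\mathbb{I}\{\hat\tau^{(-k)}(X_i)-\beta\,\widehat{\mathrm{THR}}_U^{(-k)}(X_i)>0\}-\lambda=0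 .$$ *)

theory Defs
  imports "HOL-Probability.Probability"
begin

definition gen_sigma :: "'w measure \<Rightarrow> ('w \<Rightarrow> 'c) \<Rightarrow> 'c measure \<Rightarrow> 'w measure" where
  "gen_sigma M W MW = vimage_algebra (space M) W MW"

definition cond_indep ::
  "'w measure \<Rightarrow> ('w \<Rightarrow> 'a) \<Rightarrow> 'a measure \<Rightarrow> ('w \<Rightarrow> 'b) \<Rightarrow> 'b measure
     \<Rightarrow> ('w \<Rightarrow> 'c) \<Rightarrow> 'c measure \<Rightarrow> bool" where
  "cond_indep M U MU V MV W MW \<longleftrightarrow>
     (\<forall>B\<in>sets MU. \<forall>C\<in>sets MV. AE \<omega> in M.
        real_cond_exp M (gen_sigma M W MW) (indicator {\<omega>. U \<omega> \<in> B \<and> V \<omega> \<in> C}) \<omega> =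
        real_cond_exp M (gen_sigma M W MW) (indicator {\<omega>. U \<omega> \<in> B}) \<omega> *
        real_cond_exp M (gen_sigma M W MW) (indicator {\<omega>. V \<omega> \<in> C}) \<omega>)"

(* m is a version of x \<mapsto> E(Yv | Av = a, Xv = x), i.e.
   E(Yv 1{Av=a} | Xv) = m(Xv) P(Av = a | Xv)  a.s. *)
definition is_cond_mean :: "'w measure \<Rightarrow> 'x measure \<Rightarrow> ('w \<Rightarrow> 'x) \<Rightarrow> ('w \<Rightarrow> real)
     \<Rightarrow> ('w \<Rightarrow> real) \<Rightarrow> real \<Rightarrow> ('x \<Rightarrow> real) \<Rightarrow> bool" where
  "is_cond_mean M SX Xv Av Yv a m \<longleftrightarrow>
     m \<in> borel_measurable SX \<and>
     (AE \<omega> in M. real_cond_exp M (gen_sigma M Xv SX)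
                    (\<lambda>\<omega>. Yv \<omega> * indicator {\<omega>. Av \<omega> = a} \<omega>) \<omega>
                 = m (Xv \<omega>) * real_cond_exp M (gen_sigma M Xv SX) (indicator {\<omega>. Av \<omega> = a}) \<omega>)"

definition THR_U :: "('x \<Rightarrow> real) \<Rightarrow> ('x \<Rightarrow> real) \<Rightarrow> 'x \<Rightarrow> real" where
  "THR_U mu0 mu1 x = min (mu0 x) (1 - mu1 x)"

definition Psi :: "'w measure \<Rightarrow> ('w \<Rightarrow> 'x) \<Rightarrow> ('x \<Rightarrow> real) \<Rightarrow> ('x \<Rightarrow> real)
     \<Rightarrow> real \<Rightarrow> real \<Rightarrow> real" where
  "Psi M Xv tau thr lam \<beta> =
     (\<integral>\<omega>. thr (Xv \<omega>) * (if tau (Xv \<omega>) - \<beta> * thr (Xv \<omega>) > 0 then 1 else 0) \<partial>M) - lam"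

definition outer_prob_to_zero :: "'w measure \<Rightarrow> (nat \<Rightarrow> 'w set) \<Rightarrow> bool" where
  "outer_prob_to_zero M S \<longleftrightarrow>
     (\<forall>\<eta>>0. eventually (\<lambda>n. \<exists>E\<in>sets M. S n \<inter> space M \<subseteq> E \<and> measure M E < \<eta>) sequentially)"

end

theory Submission
  imports Defs
begin

(* Since the regressions lie in [0,1] under positivity, THR_U >= 0 and Psi is nonincreasing;
   with a nonzero derivative at its root b this gives Psi(b + h) < 0 < Psi(b - h) for small h.
   When both estimators are uniformly eta-close, the fold-k estimating function at any
   beta >= b + h is at most eta plus the sample mean of the fixed function
   THR_U(x) 1{tau(x) - (b + h) THR_U(x) > -eta(1 + M)}, and symmetrically below b - h.
   By Hoeffding these sample means concentrate at their expectations, which the bounded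
   density places within O(eta) of Psi(b +- h) + lambda; for small eta the estimating
   equation therefore has no solution outside (b - h, b + h). *)

lemma antimono_has_real_derivative_nonzero:
  fixes f :: "real \<Rightarrow> real"
  assumes "antimono f" and der: "(f has_real_derivative l) (at x)" and "l \<noteq> 0"
  shows "\<exists>d>0. \<forall>h. 0 < h \<and> h < d \<longrightarrow> f (x + h) < f x \<and> f x < f (x - h)"
proof -
  have "l < 0"
  proof (rule ccontr)
    assume "\<not> l < 0"
    with \<open>l \<noteq> 0\<close> obtain d where "d > 0" "\<forall>h>0. h < d \<longrightarrow> f x < f (x + h)"
      using DERIV_pos_inc_right[OF der] by force
    then have "f x < f (x + d / 2)" by simp
    moreover have "f (x + d / 2) \<le> f x"
      using \<open>antimono f\<close> \<open>d > 0\<close> by (simp add: antimonoD)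
    ultimately show False by simp
  qed
  obtain d1 where "d1 > 0" "\<forall>h>0. h < d1 \<longrightarrow> f (x + h) < f x"
    using DERIV_neg_dec_right[OF der \<open>l < 0\<close>] by blast
  moreover obtain d2 where "d2 > 0" "\<forall>h>0. h < d2 \<longrightarrow> f x < f (x - h)"
    using DERIV_neg_dec_left[OF der \<open>l < 0\<close>] by blast
  ultimately show ?thesis
    by (intro exI[of _ "min d1 d2"]) auto
qed

(* With t = tau(x), w = THR_U(x) and r = 0 this is the integrand of Psi(beta); the offset r
   absorbs the estimation error. *)
definition indicator_score :: "real \<Rightarrow> real \<Rightarrow> real \<Rightarrow> real \<Rightarrow> real" where
  "indicator_score r \<beta> t w = w * (if t - \<beta> * w > r then 1 else 0)"

lemma indicator_score_antimono:
  assumes "0 \<le> w" "\<beta> \<le> \<beta>'"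
  shows "indicator_score r \<beta>' t w \<le> indicator_score r \<beta> t w"
proof -
  have "\<beta> * w \<le> \<beta>' * w" using assms by (rule mult_right_mono[rotated])
  then show ?thesis using assms(1) by (auto simp: indicator_score_def)
qed

lemma indicator_score_unit_interval:
  "w \<in> {0..1} \<Longrightarrow> indicator_score r \<beta> t w \<in> {0..1}"
  by (auto simp: indicator_score_def)

lemma indicator_score_diff_le:
  assumes "r1 \<le> r2" "w \<in> {0..1}"
  shows "indicator_score r1 \<beta> t w - indicator_score r2 \<beta> t w
           \<le> indicator {r1<..r2} (t - \<beta> * w)"
  using assms by (auto simp: indicator_score_def indicator_def)

(* Moving (t, w) by eta moves t - beta w by at most eta (1 + B), and lowering beta only
   enlarges the indicator. *)
lemma indicator_score_perturb_le:
  assumes "\<bar>t' - t\<bar> \<le> \<eta>" "\<bar>w' - w\<bar> \<le> \<eta>" "0 \<le> w" "0 \<le> \<beta>\<^sub>0" "\<beta>\<^sub>0 \<le> \<beta>" "\<beta> \<le> B"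
  shows "indicator_score 0 \<beta> t' w' \<le> indicator_score (- \<eta> * (1 + B)) \<beta>\<^sub>0 t w + \<eta>"
proof (cases "t' - \<beta> * w' > 0")
  case True
  have "\<beta> * (w - w') \<le> \<beta> * \<eta>" "\<beta> * \<eta> \<le> B * \<eta>"
    using assms by (auto simp: abs_le_iff intro!: mult_left_mono mult_right_mono)
  moreover have "\<beta>\<^sub>0 * w \<le> \<beta> * w"
    using assms by (intro mult_right_mono) auto
  ultimately have "t - \<beta>\<^sub>0 * w > - \<eta> * (1 + B)"
    using True assms(1) by (simp add: abs_le_iff algebra_simps)
  then show ?thesis
    using True assms(2) by (simp add: indicator_score_def abs_le_iff)
next
  case False
  then show ?thesis
    using assms(1,3) by (simp add: indicator_score_def)
qed

lemma indicator_score_perturb_ge: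
  assumes "\<bar>t' - t\<bar> \<le> \<eta>" "\<bar>w' - w\<bar> \<le> \<eta>" "0 \<le> w" "0 \<le> \<beta>" "\<beta> \<le> \<beta>\<^sub>0" "\<beta> \<le> B"
  shows "indicator_score (\<eta> * (1 + B)) \<beta>\<^sub>0 t w - \<eta> \<le> indicator_score 0 \<beta> t' w'"
proof (cases "t - \<beta>\<^sub>0 * w > \<eta> * (1 + B)")
  case True
  have "\<beta> * (w' - w) \<le> \<beta> * \<eta>" "\<beta> * \<eta> \<le> B * \<eta>"
    using assms by (auto simp: abs_le_iff intro!: mult_left_mono mult_right_mono)
  moreover have "\<beta> * w \<le> \<beta>\<^sub>0 * w"
    using assms by (intro mult_right_mono) auto
  ultimately have "t' - \<beta> * w' > 0"
    using True assms(1) by (simp add: abs_le_iff algebra_simps)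
  then show ?thesis
    using True assms(2) by (simp add: indicator_score_def abs_le_iff)
next
  case False
  then show ?thesis
    using assms(1-3) by (auto simp: indicator_score_def abs_le_iff)
qed

lemma estimating_root_between_brackets:
  fixes t t' w w' :: "'i \<Rightarrow> real"
  assumes J: "finite J" "J \<noteq> {}"
    and close: "\<And>i. i \<in> J \<Longrightarrow> \<bar>t' i - t i\<bar> \<le> \<eta> \<and> \<bar>w' i - w i\<bar> \<le> \<eta> \<and> 0 \<le> w i"
    and b: "0 \<le> b" "b \<le> B" and "0 \<le> \<beta>\<^sub>u"
    and root: "(\<Sum>i\<in>J. indicator_score 0 b (t' i) (w' i)) / card J = lam"
    and upper: "(\<Sum>i\<in>J. indicator_score (- \<eta> * (1 + B)) \<beta>\<^sub>u (t i) (w i)) / card J + \<eta> < lam"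
    and lower: "lam < (\<Sum>i\<in>J. indicator_score (\<eta> * (1 + B)) \<beta>\<^sub>l (t i) (w i)) / card J - \<eta>"
  shows "\<beta>\<^sub>l < b \<and> b < \<beta>\<^sub>u"
proof -
  have n: "real (card J) > 0"
    using J by (simp add: card_gt_0_iff)
  have "\<not> \<beta>\<^sub>u \<le> b"
  proof
    assume "\<beta>\<^sub>u \<le> b"
    then have "(\<Sum>i\<in>J. indicator_score 0 b (t' i) (w' i))
        \<le> (\<Sum>i\<in>J. indicator_score (- \<eta> * (1 + B)) \<beta>\<^sub>u (t i) (w i) + \<eta>)"
      using close b \<open>0 \<le> \<beta>\<^sub>u\<close> by (intro sum_mono indicator_score_perturb_le) auto
    then show False
      using root upper n by (simp add: sum.distrib field_simps)
  qed
  moreover have "\<not> b \<le> \<beta>\<^sub>l"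
  proof
    assume "b \<le> \<beta>\<^sub>l"
    then have "(\<Sum>i\<in>J. indicator_score (\<eta> * (1 + B)) \<beta>\<^sub>l (t i) (w i) - \<eta>)
        \<le> (\<Sum>i\<in>J. indicator_score 0 b (t' i) (w' i))"
      using close b by (intro sum_mono indicator_score_perturb_ge) auto
    then show False
      using root lower n by (simp add: sum_subtractf field_simps)
  qed
  ultimately show ?thesis by simp
qed

lemma outer_prob_to_zeroI:
  assumes "\<And>n. T n \<in> sets M" and "(\<lambda>n. measure M (T n)) \<longlonglongrightarrow> 0"
  shows "outer_prob_to_zero M T"
  unfolding outer_prob_to_zero_def
proof (intro allI impI)
  fix \<eta> :: real assume "\<eta> > 0"
  with assms(2) have "eventually (\<lambda>n. measure M (T n) < \<eta>) sequentially"
    by (rule order_tendstoD)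
  then show "eventually (\<lambda>n. \<exists>E\<in>sets M. T n \<inter> space M \<subseteq> E \<and> measure M E < \<eta>) sequentially"
    by eventually_elim (use assms(1) in blast)
qed

lemma outer_prob_to_zero_Un:
  assumes "finite_measure M" "outer_prob_to_zero M S" "outer_prob_to_zero M T"
  shows "outer_prob_to_zero M (\<lambda>n. S n \<union> T n)"
  unfolding outer_prob_to_zero_def
proof (intro allI impI)
  fix \<eta> :: real assume "\<eta> > 0"
  then have "\<eta> / 2 > 0" by simp
  with assms(2,3) have
    "eventually (\<lambda>n. \<exists>E\<in>sets M. S n \<inter> space M \<subseteq> E \<and> measure M E < \<eta> / 2) sequentially"
    "eventually (\<lambda>n. \<exists>E\<in>sets M. T n \<inter> space M \<subseteq> E \<and> measure M E < \<eta> / 2) sequentially"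
    unfolding outer_prob_to_zero_def by blast+
  then show "eventually (\<lambda>n. \<exists>E\<in>sets M. (S n \<union> T n) \<inter> space M \<subseteq> E \<and> measure M E < \<eta>) sequentially"
  proof eventually_elim
    case (elim n)
    then obtain E F where "E \<in> sets M" "F \<in> sets M" "S n \<inter> space M \<subseteq> E" "T n \<inter> space M \<subseteq> F"
      and "measure M E < \<eta> / 2" "measure M F < \<eta> / 2"
      by blast
    moreover from \<open>E \<in> sets M\<close> \<open>F \<in> sets M\<close> have "measure M (E \<union> F) \<le> measure M E + measure M F"
      using assms(1) by (intro measure_subadditive) (simp_all add: finite_measure.emeasure_finite)
    ultimately show ?case
      by (intro bexI[of _ "E \<union> F"]) auto
  qed
qed

lemma outer_prob_to_zero_subset:
  assumes "eventually (\<lambda>n. S n \<inter> space M \<subseteq> T n) sequentially" "outer_prob_to_zero M T"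
  shows "outer_prob_to_zero M S"
  unfolding outer_prob_to_zero_def
proof (intro allI impI)
  fix \<eta> :: real assume "\<eta> > 0"
  with assms(2) have "eventually (\<lambda>n. \<exists>E\<in>sets M. T n \<inter> space M \<subseteq> E \<and> measure M E < \<eta>) sequentially"
    unfolding outer_prob_to_zero_def by blast
  with assms(1) show "eventually (\<lambda>n. \<exists>E\<in>sets M. S n \<inter> space M \<subseteq> E \<and> measure M E < \<eta>) sequentially"
    by eventually_elim blast
qed

lemma AE_imp_outer_prob_to_zero:
  assumes "AE \<omega> in M. P \<omega>"
  shows "outer_prob_to_zero M (\<lambda>_. {\<omega> \<in> space M. \<not> P \<omega>})"
proof -
  obtain N where "{\<omega> \<in> space M. \<not> P \<omega>} \<subseteq> N" "emeasure M N = 0" "N \<in> sets M"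
    using assms by (rule AE_E)
  then show ?thesis
    by (auto simp: outer_prob_to_zero_def measure_def intro!: bexI[of _ N])
qed

lemma iid_compose:
  assumes P: "prob_space M" and Zm: "\<And>i. Z i \<in> measurable M S"
    and ind: "prob_space.indep_vars M (\<lambda>_. S) Z UNIV"
    and idd: "\<And>i. distr M S (Z i) = distr M S (Z 0)"
    and h: "h \<in> measurable S T"
  shows "\<And>i. (\<lambda>\<omega>. h (Z i \<omega>)) \<in> measurable M T"
    and "prob_space.indep_vars M (\<lambda>_. T) (\<lambda>i \<omega>. h (Z i \<omega>)) UNIV"
    and "\<And>i. distr M T (\<lambda>\<omega>. h (Z i \<omega>)) = distr M T (\<lambda>\<omega>. h (Z 0 \<omega>))"
proof -
  show "(\<lambda>\<omega>. h (Z i \<omega>)) \<in> measurable M T" for i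
    using Zm h by measurable
  show "prob_space.indep_vars M (\<lambda>_. T) (\<lambda>i \<omega>. h (Z i \<omega>)) UNIV"
    using prob_space.indep_vars_compose2[OF P ind, of "\<lambda>_. h" "\<lambda>_. T"] h by simp
  show "distr M T (\<lambda>\<omega>. h (Z i \<omega>)) = distr M T (\<lambda>\<omega>. h (Z 0 \<omega>))" for i
    using distr_distr[OF h Zm, of i] distr_distr[OF h Zm, of 0] idd[of i] by (simp add: comp_def)
qed

lemma AE_identically_distributed:
  assumes "Z \<in> measurable M S" "Z' \<in> measurable M S" "distr M S Z = distr M S Z'"
    and "{x \<in> space S. P x} \<in> sets S" and "AE \<omega> in M. P (Z' \<omega>)"
  shows "AE \<omega> in M. P (Z \<omega>)"
proof -
  have "AE x in distr M S Z'. P x"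
    by (subst AE_distr_iff[OF assms(2,4)]) (fact assms(5))
  then show ?thesis
    by (simp only: assms(3)[symmetric] AE_distr_iff[OF assms(1,4)])
qed

lemma iid_sample_mean_consistent:
  fixes Z :: "nat \<Rightarrow> 'w \<Rightarrow> 'x" and g :: "'x \<Rightarrow> real"
  assumes P: "prob_space M" and Zm: "\<And>i. Z i \<in> measurable M S"
    and ind: "prob_space.indep_vars M (\<lambda>_. S) Z UNIV"
    and idd: "\<And>i. distr M S (Z i) = distr M S (Z 0)"
    and g: "g \<in> borel_measurable S" "AE \<omega> in M. g (Z 0 \<omega>) \<in> {0..1}"
    and J: "\<And>n. card (J n) = n" and "\<alpha> > 0"
  shows "outer_prob_to_zero M (\<lambda>n. {\<omega> \<in> space M.
            \<alpha> \<le> \<bar>(\<Sum>i\<in>J n. g (Z i \<omega>)) / n - (\<integral>\<omega>. g (Z 0 \<omega>) \<partial>M)\<bar>})"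
proof (rule outer_prob_to_zeroI)
  interpret prob_space M by (rule P)
  note gZ = iid_compose[OF P Zm ind idd g(1)]
  show "{\<omega> \<in> space M. \<alpha> \<le> \<bar>(\<Sum>i\<in>J n. g (Z i \<omega>)) / n - (\<integral>\<omega>. g (Z 0 \<omega>) \<partial>M)\<bar>} \<in> sets M" for n
    using gZ(1) by measurable
  show "(\<lambda>n. measure M {\<omega> \<in> space M.
          \<alpha> \<le> \<bar>(\<Sum>i\<in>J n. g (Z i \<omega>)) / n - (\<integral>\<omega>. g (Z 0 \<omega>) \<partial>M)\<bar>}) \<longlonglongrightarrow> 0"
  proof (rule tendsto_sandwich[of "\<lambda>_. 0" _ _ "\<lambda>n. 2 * exp (-2 * \<alpha>\<^sup>2) ^ n"])
    show "eventually (\<lambda>n. measure M {\<omega> \<in> space M.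
            \<alpha> \<le> \<bar>(\<Sum>i\<in>J n. g (Z i \<omega>)) / n - (\<integral>\<omega>. g (Z 0 \<omega>) \<partial>M)\<bar>}
          \<le> 2 * exp (-2 * \<alpha>\<^sup>2) ^ n) sequentially"
    proof (rule eventually_sequentiallyI[of 1])
      fix n :: nat assume "1 \<le> n"
      then have "finite (J n)" "J n \<noteq> {}"
        using J[of n] by (auto intro: card_ge_0_finite)
      then interpret Hoeffding_ineq_iid M "J n" "\<lambda>i \<omega>. g (Z i \<omega>)" "\<lambda>\<omega>. g (Z 0 \<omega>)" 0 1
        "\<integral>\<omega>. g (Z 0 \<omega>) \<partial>M"
        using g(2) gZ by unfold_locales (auto intro: indep_vars_subset)
      show "measure M {\<omega> \<in> space M.
            \<alpha> \<le> \<bar>(\<Sum>i\<in>J n. g (Z i \<omega>)) / n - (\<integral>\<omega>. g (Z 0 \<omega>) \<partial>M)\<bar>} \<le> 2 * exp (-2 * \<alpha>\<^sup>2) ^ n"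
        using Hoeffding_ineq_abs_ge'[of \<alpha>] \<open>\<alpha> > 0\<close> \<open>J n \<noteq> {}\<close>
        by (simp add: J exp_of_nat_mult[symmetric] mult_ac)
    qed
    have "exp (-2 * \<alpha>\<^sup>2) < 1"
      using \<open>\<alpha> > 0\<close> by simp
    then show "(\<lambda>n. 2 * exp (-2 * \<alpha>\<^sup>2) ^ n) \<longlonglongrightarrow> 0"
      by (intro tendsto_mult_right_zero LIMSEQ_power_zero) simp
  qed simp_all
qed

lemma measure_Ioc_le_density_bound:
  fixes Z :: "'w \<Rightarrow> real"
  assumes "prob_space M" and Z: "distributed M lborel Z f" and f: "\<And>t. f t \<le> ennreal B"
    and "r1 \<le> r2"
  shows "measure M (Z -` {r1<..r2} \<inter> space M) \<le> max B 0 * (r2 - r1)"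
proof -
  interpret prob_space M by fact
  have [measurable]: "f \<in> borel_measurable lborel" "Z \<in> borel_measurable M"
    using Z by (auto simp: distributed_def)
  have "emeasure M (Z -` {r1<..r2} \<inter> space M) = emeasure (distr M lborel Z) {r1<..r2}"
    by (simp add: emeasure_distr)
  also have "\<dots> = (\<integral>\<^sup>+ t. f t * indicator {r1<..r2} t \<partial>lborel)"
    using Z by (simp add: distributed_def emeasure_density)
  also have "\<dots> \<le> (\<integral>\<^sup>+ t. ennreal (max B 0) * indicator {r1<..r2} t \<partial>lborel)"
    using f by (intro nn_integral_mono mult_right_mono)
      (auto intro: order.trans ennreal_leI)
  also have "\<dots> = ennreal (max B 0 * (r2 - r1))"
    using \<open>r1 \<le> r2\<close> by (simp add: nn_integral_cmult_indicator ennreal_mult)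
  finally show ?thesis
    using \<open>r1 \<le> r2\<close> by (simp add: emeasure_eq_measure ennreal_le_iff)
qed

lemma integrable_indicator_score:
  fixes T W :: "'w \<Rightarrow> real"
  assumes "finite_measure M" "T \<in> borel_measurable M" "W \<in> borel_measurable M"
    and W: "AE \<omega> in M. W \<omega> \<in> {0..1}"
  shows "integrable M (\<lambda>\<omega>. indicator_score r \<beta> (T \<omega>) (W \<omega>))"
proof (rule finite_measure.integrable_const_bound[OF assms(1), where B = 1])
  show "AE \<omega> in M. norm (indicator_score r \<beta> (T \<omega>) (W \<omega>)) \<le> 1"
    using W by eventually_elim (auto simp: indicator_score_def)
  show "(\<lambda>\<omega>. indicator_score r \<beta> (T \<omega>) (W \<omega>)) \<in> borel_measurable M"
    using assms(2,3) unfolding indicator_score_def by measurable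
qed

lemma integral_indicator_score_diff_le:
  fixes T W :: "'w \<Rightarrow> real"
  assumes P: "prob_space M" and TW: "T \<in> borel_measurable M" "W \<in> borel_measurable M"
    and W: "AE \<omega> in M. W \<omega> \<in> {0..1}"
    and f: "distributed M lborel (\<lambda>\<omega>. T \<omega> - \<beta> * W \<omega>) f" "\<And>t. f t \<le> ennreal B"
    and "r1 \<le> r2"
  shows "(\<integral>\<omega>. indicator_score r1 \<beta> (T \<omega>) (W \<omega>) \<partial>M)
           - (\<integral>\<omega>. indicator_score r2 \<beta> (T \<omega>) (W \<omega>) \<partial>M) \<le> max B 0 * (r2 - r1)"
proof -
  interpret prob_space M by fact
  define Z where "Z = (\<lambda>\<omega>. T \<omega> - \<beta> * W \<omega>)"
  note int = integrable_indicator_score[OF finite_measure_axioms TW W]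
  have "(\<integral>\<omega>. indicator_score r1 \<beta> (T \<omega>) (W \<omega>) \<partial>M) - (\<integral>\<omega>. indicator_score r2 \<beta> (T \<omega>) (W \<omega>) \<partial>M)
      = (\<integral>\<omega>. indicator_score r1 \<beta> (T \<omega>) (W \<omega>) - indicator_score r2 \<beta> (T \<omega>) (W \<omega>) \<partial>M)"
    using int by simp
  also have "\<dots> \<le> (\<integral>\<omega>. indicator (Z -` {r1<..r2}) \<omega> \<partial>M)"
  proof (rule integral_mono_AE)
    have "Z -` {r1<..r2} \<inter> space M \<in> sets M"
      using TW unfolding Z_def by measurable
    then show "integrable M (indicator (Z -` {r1<..r2}) :: 'w \<Rightarrow> real)"
      by (simp add: integrable_indicator_iff less_top[symmetric])
    show "AE \<omega> in M. indicator_score r1 \<beta> (T \<omega>) (W \<omega>) - indicator_score r2 \<beta> (T \<omega>) (W \<omega>)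
        \<le> indicator (Z -` {r1<..r2}) \<omega>"
      using W by eventually_elim (simp add: Z_def indicator_vimage indicator_score_diff_le \<open>r1 \<le> r2\<close>)
  qed (use int in simp)
  also have "\<dots> \<le> max B 0 * (r2 - r1)"
    using measure_Ioc_le_density_bound[OF P f \<open>r1 \<le> r2\<close>] by (simp add: Z_def)
  finally show ?thesis .
qed

lemma Psi_eq_integral_indicator_score:
  "Psi M Xv tau thr lam \<beta> = (\<integral>\<omega>. indicator_score 0 \<beta> (tau (Xv \<omega>)) (thr (Xv \<omega>)) \<partial>M) - lam"
  by (simp add: Psi_def indicator_score_def)

lemma antimono_Psi:
  assumes M: "finite_measure M" and Xv: "Xv \<in> measurable M SX"
    and tau: "tau \<in> borel_measurable SX" and thr: "thr \<in> borel_measurable SX"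
    and thr01: "AE \<omega> in M. thr (Xv \<omega>) \<in> {0..1}"
  shows "antimono (Psi M Xv tau thr lam)"
proof (rule antimonoI)
  fix \<beta> \<beta>' :: real assume "\<beta> \<le> \<beta>'"
  have TW: "(\<lambda>\<omega>. tau (Xv \<omega>)) \<in> borel_measurable M" "(\<lambda>\<omega>. thr (Xv \<omega>)) \<in> borel_measurable M"
    using Xv tau thr by measurable
  have "(\<integral>\<omega>. indicator_score 0 \<beta>' (tau (Xv \<omega>)) (thr (Xv \<omega>)) \<partial>M)
      \<le> (\<integral>\<omega>. indicator_score 0 \<beta> (tau (Xv \<omega>)) (thr (Xv \<omega>)) \<partial>M)"
    using thr01 \<open>\<beta> \<le> \<beta>'\<close>
    by (intro integral_mono_AE integrable_indicator_score[OF M TW thr01])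
      (auto elim!: eventually_mono intro: indicator_score_antimono)
  then show "Psi M Xv tau thr lam \<beta>' \<le> Psi M Xv tau thr lam \<beta>"
    by (simp add: Psi_eq_integral_indicator_score)
qed

lemma Psi_root_bracket:
  fixes Xv :: "'w \<Rightarrow> 'x" and tau thr :: "'x \<Rightarrow> real"
  assumes P: "prob_space M" and Xv: "Xv \<in> measurable M SX"
    and tau: "tau \<in> borel_measurable SX" and thr: "thr \<in> borel_measurable SX"
    and thr01: "AE \<omega> in M. thr (Xv \<omega>) \<in> {0..1}"
    and density: "\<And>\<beta>. \<exists>f B. distributed M lborel (\<lambda>\<omega>. tau (Xv \<omega>) - \<beta> * thr (Xv \<omega>)) f
                            \<and> (\<forall>t. f t \<le> ennreal B)"
    and root: "Psi M Xv tau thr lam \<beta>\<^sub>0 = 0"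
    and der: "(Psi M Xv tau thr lam has_real_derivative l) (at \<beta>\<^sub>0)" "l \<noteq> 0"
    and "0 \<le> Mb" "\<epsilon> > 0"
  shows "\<exists>\<beta>\<^sub>l \<beta>\<^sub>u \<eta> \<alpha>. \<beta>\<^sub>0 - \<epsilon> \<le> \<beta>\<^sub>l \<and> \<beta>\<^sub>l < \<beta>\<^sub>0 \<and> \<beta>\<^sub>0 < \<beta>\<^sub>u \<and> \<beta>\<^sub>u \<le> \<beta>\<^sub>0 + \<epsilon> \<and> 0 < \<eta> \<and> 0 < \<alpha> \<and>
    (\<integral>\<omega>. indicator_score (- \<eta> * (1 + Mb)) \<beta>\<^sub>u (tau (Xv \<omega>)) (thr (Xv \<omega>)) \<partial>M) + \<alpha> + \<eta> < lam \<and>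
    lam < (\<integral>\<omega>. indicator_score (\<eta> * (1 + Mb)) \<beta>\<^sub>l (tau (Xv \<omega>)) (thr (Xv \<omega>)) \<partial>M) - \<alpha> - \<eta>"
proof -
  interpret prob_space M by fact
  let ?\<Psi> = "Psi M Xv tau thr lam"
  let ?E = "\<lambda>r \<beta>. \<integral>\<omega>. indicator_score r \<beta> (tau (Xv \<omega>)) (thr (Xv \<omega>)) \<partial>M"
  have TW: "(\<lambda>\<omega>. tau (Xv \<omega>)) \<in> borel_measurable M" "(\<lambda>\<omega>. thr (Xv \<omega>)) \<in> borel_measurable M"
    using Xv tau thr by measurable
  obtain d where "d > 0" and d: "\<And>h. 0 < h \<Longrightarrow> h < d \<Longrightarrow> ?\<Psi> (\<beta>\<^sub>0 + h) < 0 \<and> 0 < ?\<Psi> (\<beta>\<^sub>0 - h)"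
    using antimono_has_real_derivative_nonzero[OF antimono_Psi[OF finite_measure_axioms Xv tau thr thr01] der]
    unfolding root by blast
  define h where "h = min \<epsilon> (d / 2)"
  have h: "0 < h" "h < d" "h \<le> \<epsilon>"
    using \<open>\<epsilon> > 0\<close> \<open>d > 0\<close> by (auto simp: h_def)
  define q where "q = min (- ?\<Psi> (\<beta>\<^sub>0 + h)) (?\<Psi> (\<beta>\<^sub>0 - h))"
  have q: "0 < q" "?\<Psi> (\<beta>\<^sub>0 + h) \<le> - q" "q \<le> ?\<Psi> (\<beta>\<^sub>0 - h)"
    using d[OF h(1,2)] by (auto simp: q_def)
  obtain fu Bu fl Bl where
    fu: "distributed M lborel (\<lambda>\<omega>. tau (Xv \<omega>) - (\<beta>\<^sub>0 + h) * thr (Xv \<omega>)) fu" "\<And>t. fu t \<le> ennreal Bu" and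
    fl: "distributed M lborel (\<lambda>\<omega>. tau (Xv \<omega>) - (\<beta>\<^sub>0 - h) * thr (Xv \<omega>)) fl" "\<And>t. fl t \<le> ennreal Bl"
    using density by meson
  (* The margin q is spent in quarters: on the density error B rho, on eta, on alpha, and as slack. *)
  define \<rho> where "\<rho> = q / (4 * (max Bu 0 + max Bl 0 + 1))"
  define \<eta> where "\<eta> = \<rho> / (1 + Mb)"
  have \<rho>: "0 < \<rho>" "max Bu 0 * \<rho> \<le> q / 4" "max Bl 0 * \<rho> \<le> q / 4" "\<rho> \<le> q / 4"
    using q(1) by (auto simp: \<rho>_def field_simps)
  have \<eta>: "0 < \<eta>" "\<eta> * (1 + Mb) = \<rho>" "\<eta> \<le> \<rho>"
    using \<rho>(1) \<open>0 \<le> Mb\<close> by (auto simp: \<eta>_def field_simps)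
  have "?E (- \<rho>) (\<beta>\<^sub>0 + h) - ?E 0 (\<beta>\<^sub>0 + h) \<le> max Bu 0 * (0 - - \<rho>)"
    using \<rho>(1) by (intro integral_indicator_score_diff_le[OF P TW thr01 fu]) simp
  moreover have "?E 0 (\<beta>\<^sub>0 - h) - ?E \<rho> (\<beta>\<^sub>0 - h) \<le> max Bl 0 * (\<rho> - 0)"
    using \<rho>(1) by (intro integral_indicator_score_diff_le[OF P TW thr01 fl]) simp
  ultimately show ?thesis
    using h q \<rho> \<eta>
    by (intro exI[of _ "\<beta>\<^sub>0 - h"] exI[of _ "\<beta>\<^sub>0 + h"] exI[of _ \<eta>] exI[of _ "q / 4"])
      (auto simp: Psi_eq_integral_indicator_score)
qed

lemma subalgebra_gen_sigma:
  "X \<in> measurable M SX \<Longrightarrow> subalgebra M (gen_sigma M X SX)"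
  unfolding subalgebra_def gen_sigma_def by (simp add: sets_image_in_sets)

lemma is_cond_mean_unit_interval:
  assumes P: "prob_space M" and X: "X \<in> measurable M SX"
    and A: "A \<in> borel_measurable M" and Y: "Y \<in> borel_measurable M"
    and Y01: "\<And>\<omega>. \<omega> \<in> space M \<Longrightarrow> Y \<omega> \<in> {0..1}"
    and m: "is_cond_mean M SX X A Y a m"
    and pos: "AE \<omega> in M. real_cond_exp M (gen_sigma M X SX) (indicator {\<omega>. A \<omega> = a}) \<omega> > 0"
  shows "AE \<omega> in M. m (X \<omega>) \<in> {0..1}"
proof -
  interpret prob_space M by fact
  interpret F: finite_measure_subalgebra M "gen_sigma M X SX"
    by unfold_locales (rule subalgebra_gen_sigma[OF X])
  let ?p = "real_cond_exp M (gen_sigma M X SX) (indicator {\<omega>. A \<omega> = a})"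
  let ?c = "real_cond_exp M (gen_sigma M X SX) (\<lambda>\<omega>. Y \<omega> * indicator {\<omega>. A \<omega> = a} \<omega>)"
  have ind: "indicator {\<omega>. A \<omega> = a} \<in> borel_measurable M"
    using A by (simp add: borel_measurable_indicator')
  have Yind: "(\<lambda>\<omega>. Y \<omega> * indicator {\<omega>. A \<omega> = a} \<omega>) \<in> borel_measurable M"
    using Y ind by (rule borel_measurable_times)
  have "AE \<omega> in M. 0 \<le> ?c \<omega>"
    using Y01 by (intro F.real_cond_exp_pos[OF AE_I2 Yind]) (auto simp: indicator_def)
  moreover have "AE \<omega> in M. ?c \<omega> \<le> ?p \<omega>"
    using Y01 Yind ind
    by (intro F.real_cond_exp_mono AE_I2 integrable_const_bound[where B = 1]) (auto simp: indicator_def)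
  moreover have "AE \<omega> in M. ?c \<omega> = m (X \<omega>) * ?p \<omega>"
    using m by (simp add: is_cond_mean_def)
  ultimately show ?thesis
    using pos by eventually_elim (auto simp: zero_le_mult_iff mult_le_cancel_right2)
qed

lemma propensity_cond_exp_pos:
  fixes A :: "'w \<Rightarrow> real"
  assumes P: "prob_space M" and X: "X \<in> measurable M SX" and A: "A \<in> borel_measurable M"
    and A01: "\<And>\<omega>. \<omega> \<in> space M \<Longrightarrow> A \<omega> \<in> {0, 1}"
    and e: "AE \<omega> in M. real_cond_exp M (gen_sigma M X SX) (indicator {\<omega>. A \<omega> = 1}) \<omega> = e (X \<omega>)"
    and e01: "\<And>x. x \<in> space SX \<Longrightarrow> 0 < e x \<and> e x < 1"
    and a: "a \<in> {0, 1}"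
  shows "AE \<omega> in M. real_cond_exp M (gen_sigma M X SX) (indicator {\<omega>. A \<omega> = a}) \<omega> > 0"
proof -
  interpret prob_space M by fact
  interpret F: finite_measure_subalgebra M "gen_sigma M X SX"
    by unfold_locales (rule subalgebra_gen_sigma[OF X])
  let ?p = "\<lambda>a. real_cond_exp M (gen_sigma M X SX) (indicator {\<omega>. A \<omega> = a})"
  have ind: "indicator {\<omega>. A \<omega> = b} \<in> borel_measurable M" for b
    using A by (simp add: borel_measurable_indicator')
  have int: "integrable M (indicator {\<omega>. A \<omega> = b} :: _ \<Rightarrow> real)" for b
    using ind by (intro integrable_const_bound[where B = 1] AE_I2) (auto simp: indicator_def)
  have eX: "AE \<omega> in M. 0 < e (X \<omega>) \<and> e (X \<omega>) < 1"
    using e01 measurable_space[OF X] by (intro AE_I2) blast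
  from a consider "a = 1" | "a = 0" by blast
  then show ?thesis
  proof cases
    case 1
    show ?thesis
      using e eX unfolding \<open>a = 1\<close> by eventually_elim simp
  next
    case 2
    have "AE \<omega> in M. ?p 0 \<omega> = real_cond_exp M (gen_sigma M X SX) (\<lambda>\<omega>. 1 - indicator {\<omega>. A \<omega> = 1} \<omega>) \<omega>"
      using A01 by (intro F.real_cond_exp_cong AE_I2 ind borel_measurable_diff borel_measurable_const)
        (auto simp: indicator_def)
    moreover have "AE \<omega> in M. real_cond_exp M (gen_sigma M X SX) (\<lambda>\<omega>. 1 - indicator {\<omega>. A \<omega> = 1} \<omega>) \<omega>
        = real_cond_exp M (gen_sigma M X SX) (\<lambda>_. 1) \<omega> - ?p 1 \<omega>"
      using int by (intro F.real_cond_exp_diff) auto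
    moreover have "AE \<omega> in M. real_cond_exp M (gen_sigma M X SX) (\<lambda>_. 1) \<omega> = (1 :: real)"
      by (intro F.real_cond_exp_F_meas) auto
    ultimately show ?thesis
      using e eX unfolding \<open>a = 0\<close> by eventually_elim simp
  qed
qed

lemma estimating_root_consistent:
  fixes M :: "'w measure" and SX :: "'x measure" and X :: "nat \<Rightarrow> 'w \<Rightarrow> 'x"
    and tau thr :: "'x \<Rightarrow> real" and tauh thrh :: "nat \<Rightarrow> 'w \<Rightarrow> 'x \<Rightarrow> real"
    and J :: "nat \<Rightarrow> nat set" and betah :: "nat \<Rightarrow> 'w \<Rightarrow> real"
  assumes P: "prob_space M" and X: "\<And>i. X i \<in> measurable M SX"
    and indep: "prob_space.indep_vars M (\<lambda>_. SX) X UNIV"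
    and ident: "\<And>i. distr M SX (X i) = distr M SX (X 0)"
    and tau: "tau \<in> borel_measurable SX" and thr: "thr \<in> borel_measurable SX"
    and thr01: "AE \<omega> in M. thr (X 0 \<omega>) \<in> {0..1}"
    and density: "\<And>\<beta>. \<exists>f B. distributed M lborel (\<lambda>\<omega>. tau (X 0 \<omega>) - \<beta> * thr (X 0 \<omega>)) f
                            \<and> (\<forall>t. f t \<le> ennreal B)"
    and root: "Psi M (X 0) tau thr lam \<beta>\<^sub>0 = 0"
    and der: "(Psi M (X 0) tau thr lam has_real_derivative l) (at \<beta>\<^sub>0)" "l \<noteq> 0"
    and "0 \<le> \<beta>\<^sub>0"
    and J: "\<And>n. card (J n) = n"
    and cons_tau: "\<And>\<eta>. \<eta> > 0 \<Longrightarrow>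
      outer_prob_to_zero M (\<lambda>n. {\<omega>. \<exists>x\<in>space SX. \<bar>tauh n \<omega> x - tau x\<bar> > \<eta>})"
    and cons_thr: "\<And>\<eta>. \<eta> > 0 \<Longrightarrow>
      outer_prob_to_zero M (\<lambda>n. {\<omega>. \<exists>x\<in>space SX. \<bar>thrh n \<omega> x - thr x\<bar> > \<eta>})"
    and solves: "\<And>n \<omega>. n \<ge> 1 \<Longrightarrow> \<omega> \<in> space M \<Longrightarrow> betah n \<omega> \<in> {0..Mb} \<and>
      (\<Sum>i\<in>J n. indicator_score 0 (betah n \<omega>) (tauh n \<omega> (X i \<omega>)) (thrh n \<omega> (X i \<omega>))) / card (J n) = lam"
    and "\<epsilon> > 0"
  shows "outer_prob_to_zero M (\<lambda>n. {\<omega>. \<bar>betah n \<omega> - \<beta>\<^sub>0\<bar> > \<epsilon>})"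
proof -
  interpret prob_space M by fact
  have "0 \<le> Mb"
    using solves[of 1] not_empty by fastforce
  obtain \<beta>\<^sub>l \<beta>\<^sub>u \<eta> \<alpha> where bracket: "\<beta>\<^sub>0 - \<epsilon> \<le> \<beta>\<^sub>l" "\<beta>\<^sub>l < \<beta>\<^sub>0" "\<beta>\<^sub>0 < \<beta>\<^sub>u" "\<beta>\<^sub>u \<le> \<beta>\<^sub>0 + \<epsilon>" "0 < \<eta>" "0 < \<alpha>"
    "(\<integral>\<omega>. indicator_score (- \<eta> * (1 + Mb)) \<beta>\<^sub>u (tau (X 0 \<omega>)) (thr (X 0 \<omega>)) \<partial>M) + \<alpha> + \<eta> < lam"
    "lam < (\<integral>\<omega>. indicator_score (\<eta> * (1 + Mb)) \<beta>\<^sub>l (tau (X 0 \<omega>)) (thr (X 0 \<omega>)) \<partial>M) - \<alpha> - \<eta>"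
    using Psi_root_bracket[OF P X tau thr thr01 density root der \<open>0 \<le> Mb\<close> \<open>\<epsilon> > 0\<close>] by blast
  define g where "g = (\<lambda>r \<beta> x. indicator_score r \<beta> (tau x) (thr x))"
  define dev where "dev r \<beta> n = {\<omega> \<in> space M.
    \<alpha> \<le> \<bar>(\<Sum>i\<in>J n. g r \<beta> (X i \<omega>)) / n - (\<integral>\<omega>. g r \<beta> (X 0 \<omega>) \<partial>M)\<bar>}" for r \<beta> n
  define bad where "bad n = {\<omega>. \<exists>x\<in>space SX. \<bar>tauh n \<omega> x - tau x\<bar> > \<eta>}
    \<union> {\<omega>. \<exists>x\<in>space SX. \<bar>thrh n \<omega> x - thr x\<bar> > \<eta>}
    \<union> dev (- \<eta> * (1 + Mb)) \<beta>\<^sub>u n \<union> dev (\<eta> * (1 + Mb)) \<beta>\<^sub>l n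
    \<union> {\<omega> \<in> space M. \<not> (\<forall>i. thr (X i \<omega>) \<in> {0..1})}" for n
  have "outer_prob_to_zero M (dev r \<beta>)" for r \<beta>
    unfolding dev_def using tau thr thr01 \<open>0 < \<alpha>\<close>
    by (intro iid_sample_mean_consistent[OF P X indep ident _ _ J]) (auto simp: g_def
        indicator_score_def elim: eventually_mono)
  moreover have "AE \<omega> in M. \<forall>i. thr (X i \<omega>) \<in> {0..1}"
    using AE_identically_distributed[OF X X ident _ thr01] thr by (simp add: AE_all_countable)
  ultimately have "outer_prob_to_zero M bad"
    unfolding bad_def by (intro outer_prob_to_zero_Un finite_measure_axioms cons_tau cons_thr
        AE_imp_outer_prob_to_zero \<open>0 < \<eta>\<close>)
  moreover have good: "\<bar>betah n \<omega> - \<beta>\<^sub>0\<bar> < \<epsilon>" if "1 \<le> n" "\<omega> \<in> space M" "\<omega> \<notin> bad n" for n \<omega>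
  proof -
    have close: "\<And>i. \<bar>tauh n \<omega> (X i \<omega>) - tau (X i \<omega>)\<bar> \<le> \<eta> \<and>
          \<bar>thrh n \<omega> (X i \<omega>) - thr (X i \<omega>)\<bar> \<le> \<eta> \<and> 0 \<le> thr (X i \<omega>)"
      and mean_u: "\<bar>(\<Sum>i\<in>J n. g (- \<eta> * (1 + Mb)) \<beta>\<^sub>u (X i \<omega>)) / n
             - (\<integral>\<omega>. g (- \<eta> * (1 + Mb)) \<beta>\<^sub>u (X 0 \<omega>) \<partial>M)\<bar> < \<alpha>"
      and mean_l: "\<bar>(\<Sum>i\<in>J n. g (\<eta> * (1 + Mb)) \<beta>\<^sub>l (X i \<omega>)) / n
             - (\<integral>\<omega>. g (\<eta> * (1 + Mb)) \<beta>\<^sub>l (X 0 \<omega>) \<partial>M)\<bar> < \<alpha>"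
      using that(2,3) measurable_space[OF X that(2)] by (auto simp: bad_def dev_def not_le not_less)
    have "finite (J n)" "J n \<noteq> {}"
      using J[of n] \<open>1 \<le> n\<close> by (auto simp: card_ge_0_finite)
    moreover have "(\<Sum>i\<in>J n. g (- \<eta> * (1 + Mb)) \<beta>\<^sub>u (X i \<omega>)) / card (J n) + \<eta> < lam"
      using mean_u bracket(7) by (simp add: J g_def abs_less_iff)
    moreover have "lam < (\<Sum>i\<in>J n. g (\<eta> * (1 + Mb)) \<beta>\<^sub>l (X i \<omega>)) / card (J n) - \<eta>"
      using mean_l bracket(8) by (simp add: J g_def abs_less_iff)
    ultimately have "\<beta>\<^sub>l < betah n \<omega> \<and> betah n \<omega> < \<beta>\<^sub>u"
      using close solves[OF that(1,2)] bracket(3) \<open>0 \<le> \<beta>\<^sub>0\<close> unfolding g_def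
      by (intro estimating_root_between_brackets[where B = Mb]) auto
    with bracket(1,4) show ?thesis
      by linarith
  qed
  have "\<forall>\<^sub>F n in sequentially. {\<omega>. \<bar>betah n \<omega> - \<beta>\<^sub>0\<bar> > \<epsilon>} \<inter> space M \<subseteq> bad n"
  proof (intro eventually_sequentiallyI[of 1] subsetI)
    fix n \<omega> assume "1 \<le> n" "\<omega> \<in> {\<omega>. \<bar>betah n \<omega> - \<beta>\<^sub>0\<bar> > \<epsilon>} \<inter> space M"
    then show "\<omega> \<in> bad n"
      using good[of n \<omega>] by auto
  qed
  ultimately show ?thesis
    by (rule outer_prob_to_zero_subset[rotated])
qed

theorem lemma1:
  fixes M :: "'w measure" and SX :: "'x measure"
    and X :: "nat \<Rightarrow> 'w \<Rightarrow> 'x" and A Y0 Y1 :: "nat \<Rightarrow> 'w \<Rightarrow> real"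
    and mu0 mu1 :: "'x \<Rightarrow> real"
    and K :: nat and I :: "nat \<Rightarrow> nat \<Rightarrow> nat set"
    and tauh thrh :: "nat \<Rightarrow> nat \<Rightarrow> (nat \<Rightarrow> 'x \<times> real \<times> real) \<Rightarrow> 'x \<Rightarrow> real"
    and betah :: "nat \<Rightarrow> nat \<Rightarrow> 'w \<Rightarrow> real"
    and lam eps Mb c betad :: real and k :: nat
  defines "Yobs \<equiv> \<lambda>i \<omega>. A i \<omega> * Y1 i \<omega> + (1 - A i \<omega>) * Y0 i \<omega>"
  defines "tau \<equiv> \<lambda>x. mu1 x - mu0 x"
  defines "thr \<equiv> THR_U mu0 mu1"
  defines "Ic \<equiv> \<lambda>n k. {0..<K * n} - I n k"
  defines "D \<equiv> \<lambda>n k \<omega>. restrict (\<lambda>i. (X i \<omega>, A i \<omega>, Yobs i \<omega>)) (Ic n k)"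
  (* i.i.d. superpopulation sample *)
  assumes P: "prob_space M"
  assumes meas: "\<And>i. (\<lambda>\<omega>. (X i \<omega>, A i \<omega>, Y0 i \<omega>, Y1 i \<omega>))
                   \<in> measurable M (SX \<Otimes>\<^sub>M borel \<Otimes>\<^sub>M borel \<Otimes>\<^sub>M borel)"
  assumes indep: "prob_space.indep_vars M (\<lambda>_. SX \<Otimes>\<^sub>M borel \<Otimes>\<^sub>M borel \<Otimes>\<^sub>M borel)
                   (\<lambda>i \<omega>. (X i \<omega>, A i \<omega>, Y0 i \<omega>, Y1 i \<omega>)) UNIV"
  assumes ident: "\<And>i. distr M (SX \<Otimes>\<^sub>M borel \<Otimes>\<^sub>M borel \<Otimes>\<^sub>M borel) (\<lambda>\<omega>. (X i \<omega>, A i \<omega>, Y0 i \<omega>, Y1 i \<omega>))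
                     = distr M (SX \<Otimes>\<^sub>M borel \<Otimes>\<^sub>M borel \<Otimes>\<^sub>M borel) (\<lambda>\<omega>. (X 0 \<omega>, A 0 \<omega>, Y0 0 \<omega>, Y1 0 \<omega>))"
  assumes binary: "\<And>i \<omega>. \<omega> \<in> space M \<Longrightarrow> A i \<omega> \<in> {0, 1} \<and> Y0 i \<omega> \<in> {0, 1} \<and> Y1 i \<omega> \<in> {0, 1}"
  (* mu_a(x) = E(Y | A = a, X = x) *)
  assumes mu0: "is_cond_mean M SX (X 0) (A 0) (Yobs 0) 0 mu0"
  assumes mu1: "is_cond_mean M SX (X 0) (A 0) (Yobs 0) 1 mu1"
  (* Assumption 1 *)
  assumes A1i: "cond_indep M (\<lambda>\<omega>. (Y0 0 \<omega>, Y1 0 \<omega>)) (borel \<Otimes>\<^sub>M borel) (A 0) borel (X 0) SX"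
  assumes A1ii: "0 < eps" "eps < 1/2"
    "\<exists>e. e \<in> borel_measurable SX \<and>
         (AE \<omega> in M. real_cond_exp M (gen_sigma M (X 0) SX) (indicator {\<omega>. A 0 \<omega> = 1}) \<omega> = e (X 0 \<omega>)) \<and>
         (\<forall>x\<in>space SX. eps < e x \<and> e x < 1 - eps)"
  (* beta-dagger solves Psi = 0 *)
  assumes root: "Psi M (X 0) tau thr lam betad = 0"
  (* Condition 1 *)
  assumes C1i: "\<exists>\<delta>>0. \<exists>Psi'. (\<forall>\<beta>\<in>ball betad \<delta>.
                    (Psi M (X 0) tau thr lam has_real_derivative Psi' \<beta>) (at \<beta>))
                 \<and> continuous_on (ball betad \<delta>) Psi' \<and> \<bar>Psi' betad\<bar> \<ge> c"
  assumes C1ii: "0 < betad" "betad < Mb"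
  assumes C1iii: "c > 0"
  (* Condition 2 *)
  assumes C2: "\<And>\<beta>. \<exists>f B. distributed M lborel (\<lambda>\<omega>. tau (X 0 \<omega>) - \<beta> * thr (X 0 \<omega>)) f
                         \<and> (\<forall>t. f t \<le> ennreal B)"
  (* cross-fitting partition of {0..<N}, N = K n, into K folds of size n *)
  assumes K: "0 < K" and k: "k < K"
  assumes part: "\<And>n. (\<Union>j<K. I n j) = {0..<K * n}"
    "\<And>n j. j < K \<Longrightarrow> card (I n j) = n"
    "\<And>n j j'. j < K \<Longrightarrow> j' < K \<Longrightarrow> j \<noteq> j' \<Longrightarrow> I n j \<inter> I n j' = {}"
  (* the estimators are measurable functions of the out-of-fold observations only *)
  assumes est_meas:
    "\<And>n j. j < K \<Longrightarrow> (\<lambda>(d, x). tauh n j d x)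
       \<in> borel_measurable (PiM (Ic n j) (\<lambda>_. SX \<Otimes>\<^sub>M borel \<Otimes>\<^sub>M borel) \<Otimes>\<^sub>M SX)"
    "\<And>n j. j < K \<Longrightarrow> (\<lambda>(d, x). thrh n j d x)
       \<in> borel_measurable (PiM (Ic n j) (\<lambda>_. SX \<Otimes>\<^sub>M borel \<Otimes>\<^sub>M borel) \<Otimes>\<^sub>M SX)"
  (* uniform consistency (in outer probability) *)
  assumes cons_tau: "\<And>j \<epsilon>. j < K \<Longrightarrow> \<epsilon> > 0 \<Longrightarrow> outer_prob_to_zero M
      (\<lambda>n. {\<omega>. \<exists>x\<in>space SX. \<bar>tauh n j (D n j \<omega>) x - tau x\<bar> > \<epsilon>})"
  assumes cons_thr: "\<And>j \<epsilon>. j < K \<Longrightarrow> \<epsilon> > 0 \<Longrightarrow> outer_prob_to_zero M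
      (\<lambda>n. {\<omega>. \<exists>x\<in>space SX. \<bar>thrh n j (D n j \<omega>) x - thr x\<bar> > \<epsilon>})"
  (* beta-hat^(k) in [0, M] solves the fold-k estimating equation *)
  assumes solves: "\<And>n \<omega>. n \<ge> 1 \<Longrightarrow> \<omega> \<in> space M \<Longrightarrow>
      betah n k \<omega> \<in> {0..Mb} \<and>
      (1 / real (card (I n k))) *
        (\<Sum>i\<in>I n k. thrh n k (D n k \<omega>) (X i \<omega>) *
           (if tauh n k (D n k \<omega>) (X i \<omega>) - betah n k \<omega> * thrh n k (D n k \<omega>) (X i \<omega>) > 0
            then 1 else 0)) - lam = 0"
  shows "\<forall>\<epsilon>>0. outer_prob_to_zero M (\<lambda>n. {\<omega>. \<bar>betah n k \<omega> - betad\<bar> > \<epsilon>})"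
proof (intro allI impI)
  fix \<epsilon> :: real assume "\<epsilon> > 0"
  have Xm [measurable]: "X i \<in> measurable M SX" and Am [measurable]: "A i \<in> borel_measurable M"
    and [measurable]: "Y0 i \<in> borel_measurable M" "Y1 i \<in> borel_measurable M" for i
    using meas[of i] by (simp_all add: measurable_pair_iff comp_def)
  have Yobs_meas: "Yobs 0 \<in> borel_measurable M"
    unfolding Yobs_def by measurable
  have Yobs01: "Yobs 0 \<omega> \<in> {0..1}" if "\<omega> \<in> space M" for \<omega>
    using binary[OF that, of 0] by (auto simp: Yobs_def)
  obtain e where e: "AE \<omega> in M. real_cond_exp M (gen_sigma M (X 0) SX) (indicator {\<omega>. A 0 \<omega> = 1}) \<omega> = e (X 0 \<omega>)"
    "\<And>x. x \<in> space SX \<Longrightarrow> 0 < e x \<and> e x < 1"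
    using A1ii by fastforce
  have "AE \<omega> in M. m (X 0 \<omega>) \<in> {0..1}" if "is_cond_mean M SX (X 0) (A 0) (Yobs 0) a m" "a \<in> {0, 1}" for a m
    using binary by (intro is_cond_mean_unit_interval[OF P Xm Am Yobs_meas _ that(1)]
        propensity_cond_exp_pos[OF P Xm Am _ e that(2)] Yobs01) auto
  from this[OF mu0] this[OF mu1] have thr01: "AE \<omega> in M. thr (X 0 \<omega>) \<in> {0..1}"
    by (auto simp: thr_def THR_U_def elim!: eventually_rev_mp)
  obtain l where der: "(Psi M (X 0) tau thr lam has_real_derivative l) (at betad)" "l \<noteq> 0"
    using C1i C1iii by force
  have [measurable]: "mu0 \<in> borel_measurable SX" "mu1 \<in> borel_measurable SX"
    using mu0 mu1 by (simp_all add: is_cond_mean_def)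
  have "tau \<in> borel_measurable SX" "thr \<in> borel_measurable SX"
    unfolding tau_def thr_def THR_U_def[abs_def] by measurable
  moreover have "betah n k \<omega> \<in> {0..Mb} \<and> (\<Sum>i\<in>I n k. indicator_score 0 (betah n k \<omega>)
      (tauh n k (D n k \<omega>) (X i \<omega>)) (thrh n k (D n k \<omega>) (X i \<omega>))) / card (I n k) = lam"
    if "1 \<le> n" "\<omega> \<in> space M" for n \<omega>
    using solves[OF that] by (simp add: indicator_score_def)
  ultimately show "outer_prob_to_zero M (\<lambda>n. {\<omega>. \<bar>betah n k \<omega> - betad\<bar> > \<epsilon>})"
    using C1ii(1) by (intro estimating_root_consistent[OF P iid_compose[OF P meas indep ident measurable_fst,
          unfolded fst_conv] _ _ thr01 C2 root der _ part(2)[OF k] cons_tau[OF k] cons_thr[OF k] _ \<open>\<epsilon> > 0\<close>])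
      auto
qed

end
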